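(* Let $A$ be a linearly ordered set, $a\in A$, and $H$ a passable game over $A$. Then (a) $[a]\lhd H$ or $H\le[a]$; and (b) $H\lhd[a]$ or $[a]\le H$.
   Context: Games over a poset $A$ are defined inductively: for each $a\in A$ there is an atomic game $[a]$, which has no options; and if $L$ and $R$ are non-empty sets of games, then $\{L\mid R\}$ is a composite game with left options $L$ and right options $R$. The relations $\le$ and $\lhd$ are defined by simultaneous recursion: $G\le H$ iff (1) every left option $G^L$ of $G$ satisfies $G^L\lhd H$, (2) every right option $H^R$ of $H$ satisfies $G\lhd H^R$, and (3) if $G$ or $H$ is atomic then $G\lhd H$; and $G\lhd H$ iff (1) some right option $G^R$ of $G$ satisfies $G^R\le H$, or (2) some left option $H^L$ of $H$ satisfies $G\le H^L$, or (3) $G=[a]$, $H=[b]$ are atomic and $a\le b$. A game $G$ is passable if $G\lhd G$ and recursively all its options are passable. *)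

theory Defs
  imports Main
begin

text \<open>A composite game carries its left and right options
  as partial families indexed by an arbitrary type 'i (the options are the values
  of the family); letting 'i range over all types covers games of any branching.\<close>

datatype ('a, 'i) game =
    Atom 'a
  | Comp "'i \<Rightarrow> ('a, 'i) game option" "'i \<Rightarrow> ('a, 'i) game option"

fun lopts :: "('a, 'i) game \<Rightarrow> ('a, 'i) game set" where
  "lopts (Atom a) = {}"
| "lopts (Comp L R) = {G. \<exists>i. L i = Some G}"

fun ropts :: "('a, 'i) game \<Rightarrow> ('a, 'i) game set" where
  "ropts (Atom a) = {}"
| "ropts (Comp L R) = {G. \<exists>i. R i = Some G}"

fun is_atom :: "('a, 'i) game \<Rightarrow> bool" where
  "is_atom (Atom a) = True"
| "is_atom (Comp L R) = False"

inductive wf_game :: "('a, 'i) game \<Rightarrow> bool" where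
  wf_atom: "wf_game (Atom a)"
| wf_comp: "lopts G \<noteq> {} \<Longrightarrow> ropts G \<noteq> {} \<Longrightarrow> \<not> is_atom G \<Longrightarrow>
     (\<forall>X \<in> lopts G. wf_game X) \<Longrightarrow> (\<forall>X \<in> ropts G. wf_game X) \<Longrightarrow> wf_game G"

text \<open>Since the
  recursion is well-founded, the inductive (least fixed point) definition gives
  exactly the recursively defined relations.\<close>
inductive game_le :: "('a::order, 'i) game \<Rightarrow> ('a, 'i) game \<Rightarrow> bool"
  and game_lf :: "('a::order, 'i) game \<Rightarrow> ('a, 'i) game \<Rightarrow> bool" where
  le_intro: "(\<forall>GL \<in> lopts G. game_lf GL H) \<Longrightarrow> (\<forall>HR \<in> ropts H. game_lf G HR) \<Longrightarrow>
     (is_atom G \<or> is_atom H \<longrightarrow> game_lf G H) \<Longrightarrow> game_le G H"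
| lf_right: "GR \<in> ropts G \<Longrightarrow> game_le GR H \<Longrightarrow> game_lf G H"
| lf_left: "HL \<in> lopts H \<Longrightarrow> game_le G HL \<Longrightarrow> game_lf G H"
| lf_atom: "a \<le> b \<Longrightarrow> game_lf (Atom a) (Atom b)"

inductive passable :: "('a::order, 'i) game \<Rightarrow> bool" where
  "game_lf G G \<Longrightarrow> (\<forall>X \<in> lopts G. passable X) \<Longrightarrow> (\<forall>X \<in> ropts G. passable X) \<Longrightarrow> passable G"

end

theory Submission
  imports Defs "HOL-Library.Dual_Ordered_Lattice"
begin

(* If [a] \<lhd> H fails for a passable H, then H \<le> [a]. Every left option HL satisfies
  HL \<lhd> [a], since otherwise [a] \<le> HL and so [a] \<lhd> H. And H \<lhd> [a] comes from the
  witness of H \<lhd> H: a right option HR \<le> H cannot have [a] \<lhd> HR (that would give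
  [a] \<lhd> H), so HR \<le> [a] by induction; a left option HL with H \<le> HL gives H \<lhd> [a]
  from HL \<lhd> [a]. For atomic H = [b], linearity of the order decides instead.
  Part (b) is part (a) for the mirror image of H (left and right swapped, order reversed). *)

lemma game_option_induct:
  assumes "\<And>G. (\<And>X. X \<in> lopts G \<union> ropts G \<Longrightarrow> P X) \<Longrightarrow> P G"
  shows "P G"
proof (induction G)
  case (Atom a)
  then show ?case by (rule assms) simp
next
  case (Comp L R)
  show ?case
  proof (rule assms)
    fix X assume "X \<in> lopts (Comp L R) \<union> ropts (Comp L R)"
    then show "P X" by (auto intro: Comp.IH[OF rangeI])
  qed
qed

lemma game_le_iff:
  "game_le G H \<longleftrightarrow> (\<forall>GL\<in>lopts G. game_lf GL H) \<and> (\<forall>HR\<in>ropts H. game_lf G HR)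
     \<and> (is_atom G \<or> is_atom H \<longrightarrow> game_lf G H)"
  by (auto elim: game_le.cases intro: le_intro)

lemma game_lf_iff:
  "game_lf G H \<longleftrightarrow> (\<exists>GR\<in>ropts G. game_le GR H) \<or> (\<exists>HL\<in>lopts H. game_le G HL)
     \<or> (\<exists>a b. G = Atom a \<and> H = Atom b \<and> a \<le> b)"
  by (auto elim: game_lf.cases intro: lf_right lf_left lf_atom)

lemma Atom_le_iff:
  "game_le (Atom a) H \<longleftrightarrow> game_lf (Atom a) H \<and> (\<forall>HR\<in>ropts H. game_lf (Atom a) HR)"
  by (auto simp: game_le_iff[of "Atom a"])

lemma le_Atom_iff:
  "game_le H (Atom a) \<longleftrightarrow> game_lf H (Atom a) \<and> (\<forall>HL\<in>lopts H. game_lf HL (Atom a))"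
  by (auto simp: game_le_iff[of _ "Atom a"])

lemma Atom_lf_iff:
  "game_lf (Atom a) H \<longleftrightarrow> (\<exists>HL\<in>lopts H. game_le (Atom a) HL) \<or> (\<exists>b. H = Atom b \<and> a \<le> b)"
  by (auto simp: game_lf_iff[of "Atom a"])

lemma game_lfE:
  assumes "game_lf G H"
  obtains (right) GR where "GR \<in> ropts G" and "game_le GR H"
    | (left) HL where "HL \<in> lopts H" and "game_le G HL"
    | (atoms) a b where "G = Atom a" and "H = Atom b" and "a \<le> b"
  using assms by (auto simp: game_lf_iff)

lemma Atom_lfE:
  assumes "game_lf (Atom a) H"
  obtains (left) HL where "HL \<in> lopts H" and "game_le (Atom a) HL"
    | (atom) b where "H = Atom b" and "a \<le> b"
  using assms by (auto simp: Atom_lf_iff)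

lemma game_lf_Atom_Atom_iff: "game_lf (Atom a) (Atom b) \<longleftrightarrow> a \<le> b"
  by (simp add: Atom_lf_iff)

lemma game_le_Atom_Atom_iff: "game_le (Atom a) (Atom b) \<longleftrightarrow> a \<le> b"
  by (simp add: Atom_le_iff game_lf_Atom_Atom_iff)

lemma Atom_lf_le_trans_step:
  fixes a :: "'a::order"
  assumes "game_lf (Atom a) X" and "game_le X Y"
    and IH_lopts_X: "\<And>XL. XL \<in> lopts X \<Longrightarrow> game_le (Atom a) XL \<Longrightarrow> game_lf XL Y \<Longrightarrow>
      game_lf (Atom a) Y"
    and IH_lopts_Y: "\<And>YL. YL \<in> lopts Y \<Longrightarrow> game_le (Atom a) X \<Longrightarrow> game_le X YL \<Longrightarrow>
      game_le (Atom a) YL"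
  shows "game_lf (Atom a) Y"
  using \<open>game_lf (Atom a) X\<close>
proof (cases rule: Atom_lfE)
  case (left XL)
  moreover from \<open>XL \<in> lopts X\<close> \<open>game_le X Y\<close> have "game_lf XL Y"
    by (simp add: game_le_iff)
  ultimately show ?thesis by (rule IH_lopts_X)
next
  case (atom b)
  with \<open>game_le X Y\<close> have "game_lf (Atom b) Y" by (simp add: game_le_iff)
  then show ?thesis
  proof (cases rule: Atom_lfE)
    case (left YL)
    moreover have "game_le (Atom a) X"
      using atom by (simp add: game_le_Atom_Atom_iff)
    ultimately have "game_le (Atom a) YL" using IH_lopts_Y atom(1) by blast
    with \<open>YL \<in> lopts Y\<close> show ?thesis by (rule lf_left)
  next
    case (atom c)
    with \<open>a \<le> b\<close> show ?thesis by (simp add: game_lf_Atom_Atom_iff)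
  qed
qed

lemma Atom_le_lf_trans_step:
  fixes a :: "'a::order"
  assumes "game_le (Atom a) X" and "game_lf X Y"
    and IH_ropts_X: "\<And>XR. XR \<in> ropts X \<Longrightarrow> game_lf (Atom a) XR \<Longrightarrow> game_le XR Y \<Longrightarrow>
      game_lf (Atom a) Y"
    and IH_lopts_Y: "\<And>YL. YL \<in> lopts Y \<Longrightarrow> game_le X YL \<Longrightarrow> game_le (Atom a) YL"
  shows "game_lf (Atom a) Y"
  using \<open>game_lf X Y\<close>
proof (cases rule: game_lfE)
  case (right XR)
  moreover from \<open>XR \<in> ropts X\<close> \<open>game_le (Atom a) X\<close> have "game_lf (Atom a) XR"
    by (simp add: Atom_le_iff)
  ultimately show ?thesis using IH_ropts_X by blast
next
  case (left YL)
  then have "game_le (Atom a) YL" by (rule IH_lopts_Y)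
  with \<open>YL \<in> lopts Y\<close> show ?thesis by (rule lf_left)
next
  case (atoms b c)
  with \<open>game_le (Atom a) X\<close> show ?thesis
    by (simp add: game_le_Atom_Atom_iff game_lf_Atom_Atom_iff)
qed

(* The other two laws only carry the induction. *)
lemma Atom_lf_le_trans:
  fixes a :: "'a::order" and X Y :: "('a, 'i) game"
  assumes "game_lf (Atom a) X" and "game_le X Y"
  shows "game_lf (Atom a) Y"
proof -
  have "(game_lf (Atom a) X \<longrightarrow> game_le X Y \<longrightarrow> game_lf (Atom a) Y)
    \<and> (game_le (Atom a) X \<longrightarrow> game_le X Y \<longrightarrow> game_le (Atom a) Y)
    \<and> (game_le (Atom a) X \<longrightarrow> game_lf X Y \<longrightarrow> game_lf (Atom a) Y)"
  proof (induction X arbitrary: Y rule: game_option_induct)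
    case (1 X)
    note IH_X = this
    show ?case
    proof (induction Y rule: game_option_induct)
      case (1 Y)
      note IH_Y = this
      have lf_le: "game_lf (Atom a) Y" if "game_lf (Atom a) X" and "game_le X Y"
        using that by (rule Atom_lf_le_trans_step) (use IH_X IH_Y in blast)+
      have le_le: "game_le (Atom a) Y" if "game_le (Atom a) X" and "game_le X Y"
        using that lf_le IH_Y by (simp add: Atom_le_iff game_le_iff[of X Y])
      have le_lf: "game_lf (Atom a) Y" if "game_le (Atom a) X" and "game_lf X Y"
        using that by (rule Atom_le_lf_trans_step) (use that IH_X IH_Y in blast)+
      show ?case using lf_le le_le le_lf by blast
    qed
  qed
  with assms show ?thesis by blast
qed

(* With f = dual this is the conjugate game over the reversed order; it reverses both
  relations, so facts with the atom on the left transfer to the atom on the right. *)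
primrec mirror :: "('a \<Rightarrow> 'b) \<Rightarrow> ('a, 'i) game \<Rightarrow> ('b, 'i) game" where
  "mirror f (Atom a) = Atom (f a)"
| "mirror f (Comp L R) = Comp (map_option (mirror f) \<circ> R) (map_option (mirror f) \<circ> L)"

lemma lopts_mirror [simp]: "lopts (mirror f G) = mirror f ` ropts G"
  by (cases G) (auto simp: map_option_eq_Some)

lemma ropts_mirror [simp]: "ropts (mirror f G) = mirror f ` lopts G"
  by (cases G) (auto simp: map_option_eq_Some)

lemma is_atom_mirror [simp]: "is_atom (mirror f G) = is_atom G"
  by (cases G) simp_all

lemma mirror_mirror:
  assumes "\<And>x. g (f x) = x"
  shows "mirror g (mirror f G) = G"
proof (induction G)
  case (Comp L R)
  then show ?case
    by (auto simp: fun_eq_iff option.map_comp intro!: option.map_ident_strong) (metis rangeI)+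
qed (simp add: assms)

lemma
  fixes f :: "'a::order \<Rightarrow> 'b::order"
  assumes "\<And>x y. x \<le> y \<Longrightarrow> f y \<le> f x"
  shows game_le_mirror: "game_le G H \<Longrightarrow> game_le (mirror f H) (mirror f G)"
    and game_lf_mirror: "game_lf G H \<Longrightarrow> game_lf (mirror f H) (mirror f G)"
proof (induction rule: game_le_game_lf.inducts)
  case (le_intro G H)
  then show ?case by (auto intro!: game_le_game_lf.le_intro)
next
  case (lf_right GR G H)
  then show ?case by (auto intro!: lf_left[of "mirror f GR"])
next
  case (lf_left HL H G)
  then show ?case by (auto intro!: lf_right[of "mirror f HL"])
qed (auto intro: lf_atom assms)

instance dual :: (linorder) linorder
  by standard (auto simp: dual_less_eq_iff)

lemma game_le_mirror_dual_iff:
  "game_le (mirror dual H) (mirror dual G) \<longleftrightarrow> game_le G H"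
  using game_le_mirror[of dual] game_le_mirror[of undual "mirror dual H" "mirror dual G"]
  by (auto simp: mirror_mirror dual_less_eq_iff)

lemma game_lf_mirror_dual_iff:
  "game_lf (mirror dual H) (mirror dual G) \<longleftrightarrow> game_lf G H"
  using game_lf_mirror[of dual] game_lf_mirror[of undual "mirror dual H" "mirror dual G"]
  by (auto simp: mirror_mirror dual_less_eq_iff)

lemma game_order_mirror_dual_Atom_iffs [simp]:
  "game_lf (Atom (dual a)) (mirror dual G) \<longleftrightarrow> game_lf G (Atom a)"
  "game_lf (mirror dual G) (Atom (dual a)) \<longleftrightarrow> game_lf (Atom a) G"
  "game_le (Atom (dual a)) (mirror dual G) \<longleftrightarrow> game_le G (Atom a)"
  "game_le (mirror dual G) (Atom (dual a)) \<longleftrightarrow> game_le (Atom a) G"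
  using game_lf_mirror_dual_iff[of "Atom a" G] game_lf_mirror_dual_iff[of G "Atom a"]
    game_le_mirror_dual_iff[of "Atom a" G] game_le_mirror_dual_iff[of G "Atom a"]
  by simp_all

lemma le_lf_Atom_trans:
  fixes a :: "'a::order" and X Y :: "('a, 'i) game"
  assumes "game_le X Y" and "game_lf Y (Atom a)"
  shows "game_lf X (Atom a)"
  using Atom_lf_le_trans[of "dual a" "mirror dual Y" "mirror dual X"] assms
  by (simp add: game_le_mirror_dual_iff)

lemma Atom_lf_or_le_step:
  fixes a :: "'a::linorder" and H :: "('a, 'i) game"
  assumes "game_lf H H"
    and lopts_cmp: "\<And>HL. HL \<in> lopts H \<Longrightarrow> game_lf HL (Atom a) \<or> game_le (Atom a) HL"
    and ropts_cmp: "\<And>HR. HR \<in> ropts H \<Longrightarrow> game_lf (Atom a) HR \<or> game_le HR (Atom a)"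
  shows "game_lf (Atom a) H \<or> game_le H (Atom a)"
proof (cases "game_lf (Atom a) H")
  case not_lf: False
  have lopts_lf: "game_lf HL (Atom a)" if "HL \<in> lopts H" for HL
    using lopts_cmp[OF that] lf_left[OF that] not_lf by blast
  have "game_lf H (Atom a)"
    using \<open>game_lf H H\<close>
  proof (cases rule: game_lfE)
    case (right HR)
    with ropts_cmp[of HR] not_lf Atom_lf_le_trans[of a HR H] show ?thesis
      by (auto intro: lf_right)
  next
    case (left HL)
    with lopts_lf le_lf_Atom_trans show ?thesis by blast
  next
    case (atoms b c)
    with not_lf show ?thesis by (auto simp: game_lf_Atom_Atom_iff)
  qed
  with lopts_lf show ?thesis by (simp add: le_Atom_iff)
qed simp

lemma passable_Atom_lf_or_le:
  fixes a :: "'a::linorder" and H :: "('a, 'i) game"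
  assumes "passable H"
  shows "(game_lf (Atom a) H \<or> game_le H (Atom a)) \<and> (game_lf H (Atom a) \<or> game_le (Atom a) H)"
  using assms
proof (induction rule: passable.induct)
  case (1 H)
  have "game_lf (Atom a) H \<or> game_le H (Atom a)"
    by (rule Atom_lf_or_le_step) (use 1 in auto)
  moreover have "game_lf (Atom (dual a)) (mirror dual H) \<or> game_le (mirror dual H) (Atom (dual a))"
    by (rule Atom_lf_or_le_step) (use 1 in \<open>auto simp: game_lf_mirror_dual_iff\<close>)
  ultimately show ?case by simp
qed

theorem lemma7p1:
  fixes a :: "'a::linorder" and H :: "('a, 'i) game"
  assumes "wf_game H" and "passable H"
  shows "(game_lf (Atom a) H \<or> game_le H (Atom a)) \<and> (game_lf H (Atom a) \<or> game_le (Atom a) H)"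
  using passable_Atom_lf_or_le[OF assms(2)] .

end
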